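(* Let $A$ be an MV-algebra, $d$ a $(\odot,\vee)$-derivation on $A$, and $u\in A$ with $u\le d(1)$. Define $d^u:A\to A$ by $d^u(1)=u$ and $d^u(x)=d(x)$ for $x\ne 1$. Then $d^u$ is a $(\odot,\vee)$-derivation on $A$. In particular, for every $u\in A$ the map $\chi^{(u)}$ defined by $\chi^{(u)}(1)=u$ and $\chi^{(u)}(x)=x$ for $x\neq 1$ is a $(\odot,\vee)$-derivation on $A$.
   Context: An MV-algebra is an algebra $(A,\oplus,{}^*,0)$ of type $(2,1,0)$ satisfying: $x\oplus(y\oplus z)=(x\oplus y)\oplus z$, $x\oplus y=y\oplus x$, $x\oplus 0=x$, $x^{**}=x$, $x\oplus 0^*=0^*$, $(x^*\oplus y)^*\oplus y=(y^*\oplus x)^*\oplus x$. Put $1=0^*$ and $x\odot y=(x^*\oplus y^* )^*$. The natural order is $x\le y$ iff $x^*\oplus y=1$, with lattice operations $x\vee y=(x\odot y^* )\oplus y$, $x\wedge y=x\odot(x^*\oplus y)$. A $(\odot,\vee)$-derivation on $A$ is a map $d:A\to A$ with $d(x\odot y)=(d(x)\odot y)\vee(x\odot d(y))$ for all $x,y\in A$. *)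

theory Defs
  imports Main
begin

definition mv_algebra :: "('a \<Rightarrow> 'a \<Rightarrow> 'a) \<Rightarrow> ('a \<Rightarrow> 'a) \<Rightarrow> 'a \<Rightarrow> bool" where
  "mv_algebra oplus neg zero \<longleftrightarrow>
     (\<forall>x y z. oplus x (oplus y z) = oplus (oplus x y) z) \<and>
     (\<forall>x y. oplus x y = oplus y x) \<and>
     (\<forall>x. oplus x zero = x) \<and>
     (\<forall>x. neg (neg x) = x) \<and>
     (\<forall>x. oplus x (neg zero) = neg zero) \<and>
     (\<forall>x y. oplus (neg (oplus (neg x) y)) y = oplus (neg (oplus (neg y) x)) x)"

definition mv_one :: "('a \<Rightarrow> 'a) \<Rightarrow> 'a \<Rightarrow> 'a" where
  "mv_one neg zero = neg zero"

definition mv_odot :: "('a \<Rightarrow> 'a \<Rightarrow> 'a) \<Rightarrow> ('a \<Rightarrow> 'a) \<Rightarrow> 'a \<Rightarrow> 'a \<Rightarrow> 'a" where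
  "mv_odot oplus neg x y = neg (oplus (neg x) (neg y))"

definition mv_le :: "('a \<Rightarrow> 'a \<Rightarrow> 'a) \<Rightarrow> ('a \<Rightarrow> 'a) \<Rightarrow> 'a \<Rightarrow> 'a \<Rightarrow> 'a \<Rightarrow> bool" where
  "mv_le oplus neg zero x y \<longleftrightarrow> oplus (neg x) y = mv_one neg zero"

definition mv_join :: "('a \<Rightarrow> 'a \<Rightarrow> 'a) \<Rightarrow> ('a \<Rightarrow> 'a) \<Rightarrow> 'a \<Rightarrow> 'a \<Rightarrow> 'a" where
  "mv_join oplus neg x y = oplus (mv_odot oplus neg x (neg y)) y"

definition mv_meet :: "('a \<Rightarrow> 'a \<Rightarrow> 'a) \<Rightarrow> ('a \<Rightarrow> 'a) \<Rightarrow> 'a \<Rightarrow> 'a \<Rightarrow> 'a" where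
  "mv_meet oplus neg x y = mv_odot oplus neg x (oplus (neg x) y)"

definition odot_join_derivation ::
  "('a \<Rightarrow> 'a \<Rightarrow> 'a) \<Rightarrow> ('a \<Rightarrow> 'a) \<Rightarrow> ('a \<Rightarrow> 'a) \<Rightarrow> bool" where
  "odot_join_derivation oplus neg d \<longleftrightarrow>
     (\<forall>x y. d (mv_odot oplus neg x y) =
        mv_join oplus neg (mv_odot oplus neg (d x) y) (mv_odot oplus neg x (d y)))"

end

theory Submission
  imports Defs
begin

text \<open>Since x \<odot> y = 1 forces x = y = 1, for x, y \<noteq> 1 the modified map
  agrees with d on x, y and on x \<odot> y. If x = 1 \<noteq> y, the derivation rule at 1 \<odot> y = y
  reads d y = (d 1 \<odot> y) \<squnion> d y, i.e. d 1 \<odot> y \<le> d y; hence also u \<odot> y \<le> d y, which is exactly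
  the rule for the modified map. The case x = y = 1 is idempotence of \<squnion>, and the identity
  map is a derivation with d 1 = 1 \<ge> v for every v.\<close>

locale mv =
  fixes oplus :: "'a \<Rightarrow> 'a \<Rightarrow> 'a" (infixl "\<oplus>" 65) and neg :: "'a \<Rightarrow> 'a" and zero :: 'a
  assumes mv_algebra: "mv_algebra oplus neg zero"
begin

abbreviation one :: 'a where "one \<equiv> mv_one neg zero"
abbreviation odot (infixl "\<odot>" 70) where "x \<odot> y \<equiv> mv_odot oplus neg x y"
abbreviation join (infixl "\<squnion>" 65) where "x \<squnion> y \<equiv> mv_join oplus neg x y"
abbreviation le (infix "\<preceq>" 50) where "x \<preceq> y \<equiv> mv_le oplus neg zero x y"

lemma oplus_assoc: "x \<oplus> (y \<oplus> w) = (x \<oplus> y) \<oplus> w"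
  and oplus_commute: "x \<oplus> y = y \<oplus> x"
  and oplus_zero: "x \<oplus> zero = x"
  and neg_neg: "neg (neg x) = x"
  and oplus_one: "x \<oplus> one = one"
  and mangani: "neg (neg x \<oplus> y) \<oplus> y = neg (neg y \<oplus> x) \<oplus> x"
  using mv_algebra unfolding mv_algebra_def mv_one_def by blast+

lemma zero_oplus: "zero \<oplus> x = x"
  by (metis oplus_commute oplus_zero)

lemma neg_oplus_self: "neg x \<oplus> x = one"
  using mangani[of x one] by (metis mv_one_def neg_neg oplus_commute oplus_one oplus_zero)

lemma le_one: "x \<preceq> one"
  unfolding mv_le_def by (rule oplus_one)

lemma le_oplus: "x \<preceq> x \<oplus> y"
  unfolding mv_le_def by (metis neg_oplus_self oplus_assoc oplus_commute oplus_one)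

lemma le_iff_absorb: "x \<preceq> y \<longleftrightarrow> neg (neg x \<oplus> y) \<oplus> y = y"
proof
  show "x \<preceq> y \<Longrightarrow> neg (neg x \<oplus> y) \<oplus> y = y"
    unfolding mv_le_def mv_one_def by (simp add: neg_neg zero_oplus)
  assume "neg (neg x \<oplus> y) \<oplus> y = y"
  then have "neg x \<oplus> y = neg (neg x \<oplus> y) \<oplus> (neg x \<oplus> y)"
    by (metis oplus_assoc oplus_commute)
  then show "x \<preceq> y"
    unfolding mv_le_def by (simp add: neg_oplus_self)
qed

lemma le_decomp: "x \<preceq> y \<Longrightarrow> y = x \<oplus> neg (neg y \<oplus> x)"
  by (metis le_iff_absorb mangani oplus_commute)

lemma le_trans: "x \<preceq> y \<Longrightarrow> y \<preceq> w \<Longrightarrow> x \<preceq> w"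
  by (metis le_decomp le_oplus oplus_assoc)

lemma oplus_mono: "x \<preceq> y \<Longrightarrow> x \<oplus> w \<preceq> y \<oplus> w"
  by (metis le_decomp le_oplus oplus_assoc oplus_commute)

lemma neg_antimono: "x \<preceq> y \<Longrightarrow> neg y \<preceq> neg x"
  unfolding mv_le_def by (metis neg_neg oplus_commute)

lemma odot_mono: "x \<preceq> y \<Longrightarrow> x \<odot> w \<preceq> y \<odot> w"
  unfolding mv_odot_def by (intro neg_antimono oplus_mono)

lemma odot_commute: "x \<odot> y = y \<odot> x"
  unfolding mv_odot_def by (metis oplus_commute)

lemma one_odot: "one \<odot> x = x"
  unfolding mv_odot_def mv_one_def by (metis neg_neg zero_oplus)

lemma odot_one: "x \<odot> one = x"
  by (metis odot_commute one_odot)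

lemma odot_eq_one: "x \<odot> y = one \<Longrightarrow> x = one"
  unfolding mv_odot_def mv_one_def
  by (metis le_oplus mv_le_def mv_one_def neg_neg oplus_commute oplus_zero)

lemma join_commute: "x \<squnion> y = y \<squnion> x"
  unfolding mv_join_def mv_odot_def by (metis mangani neg_neg)

lemma join_idem: "x \<squnion> x = x"
  unfolding mv_join_def mv_odot_def
  by (metis mv_one_def neg_neg neg_oplus_self zero_oplus)

lemma join_upper: "x \<preceq> x \<squnion> y"
proof -
  have "x \<squnion> y = x \<oplus> (y \<odot> neg x)"
    by (metis join_commute mv_join_def oplus_commute)
  then show ?thesis
    by (simp add: le_oplus)
qed

lemma join_eq_right_iff: "x \<squnion> y = y \<longleftrightarrow> x \<preceq> y"
proof
  show "x \<squnion> y = y \<Longrightarrow> x \<preceq> y"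
    using join_upper by metis
  show "x \<preceq> y \<Longrightarrow> x \<squnion> y = y"
    unfolding mv_join_def mv_odot_def by (simp add: le_iff_absorb neg_neg)
qed

lemma derivation_one_odot_le:
  assumes "odot_join_derivation oplus neg d"
  shows "d one \<odot> y \<preceq> d y"
proof -
  have "d y = (d one \<odot> y) \<squnion> d y"
    using assms one_odot unfolding odot_join_derivation_def by metis
  then show ?thesis
    using join_eq_right_iff by metis
qed

lemma derivation_update_one:
  assumes der: "odot_join_derivation oplus neg d" and u: "u \<preceq> d one"
  shows "odot_join_derivation oplus neg (\<lambda>x. if x = one then u else d x)"
    (is "odot_join_derivation _ _ ?d")
  unfolding odot_join_derivation_def
proof (intro allI)
  fix x y
  have absorb: "(u \<odot> w) \<squnion> d w = d w" for w
    using le_trans[OF odot_mono[OF u] derivation_one_odot_le[OF der]] join_eq_right_iff by metis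
  consider "x = one" "y = one" | "x = one" "y \<noteq> one" | "x \<noteq> one" "y = one"
    | "x \<noteq> one" "y \<noteq> one" by blast
  then show "?d (x \<odot> y) = (?d x \<odot> y) \<squnion> (x \<odot> ?d y)"
  proof cases
    case 1
    then show ?thesis by (simp add: one_odot odot_one join_idem)
  next
    case 2
    then show ?thesis by (simp add: one_odot absorb)
  next
    case 3
    then show ?thesis by (simp add: odot_one odot_commute[of x u] join_commute[of "d x"] absorb)
  next
    case 4
    then have "x \<odot> y \<noteq> one"
      using odot_eq_one by blast
    with 4 show ?thesis
      using der unfolding odot_join_derivation_def by simp
  qed
qed

lemma id_odot_join_derivation: "odot_join_derivation oplus neg (\<lambda>x. x)"
  unfolding odot_join_derivation_def by (simp add: join_idem)

end

theorem proposition3p12: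
  fixes oplus :: "'a \<Rightarrow> 'a \<Rightarrow> 'a" and neg :: "'a \<Rightarrow> 'a" and zero :: 'a
    and d :: "'a \<Rightarrow> 'a" and u :: 'a
  assumes "mv_algebra oplus neg zero"
    and "odot_join_derivation oplus neg d"
    and "mv_le oplus neg zero u (d (mv_one neg zero))"
  shows "odot_join_derivation oplus neg (\<lambda>x. if x = mv_one neg zero then u else d x) \<and>
         (\<forall>v. odot_join_derivation oplus neg (\<lambda>x. if x = mv_one neg zero then v else x))"
proof -
  interpret mv oplus neg zero
    by (rule mv.intro) (rule assms(1))
  show ?thesis
    using derivation_update_one[OF assms(2,3)]
      derivation_update_one[OF id_odot_join_derivation le_one] by blast
qed

end
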